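(* Let $n\ge1$ be an integer and $x\in\{0,1,\dots,n\}$ an observed value of $X\sim B(n,p)$. For $\alpha\in(0,1)$ let $g(\alpha)$ be the posterior mean of $p$ under the triangle prior with mode $\alpha$ (density $\frac{2}{\alpha}p$ on $(0,\alpha]$ and $\frac{2}{1-\alpha}(1-p)$ on $(\alpha,1)$): $$g(\alpha)=\frac{\frac{2}{\alpha}\int_0^\alpha p^{x+2}(1-p)^{n-x}\,dp+\frac{2}{1-\alpha}\int_\alpha^1 p^{x+1}(1-p)^{n-x+1}\,dp}{\frac{2}{\alpha}\int_0^\alpha p^{x+1}(1-p)^{n-x}\,dp+\frac{2}{1-\alpha}\int_\alpha^1 p^{x}(1-p)^{n-x+1}\,dp},$$ and let $\hat p_{IB}(x)$ denote the unique $\tau\in(0,1)$ with $g(\tau)=\tau$. Then: (1) $\hat p_{IB}(x)$ is the unique real zero in the interval $(0,1)$ of the integer-coefficient polynomial $$J_n(a,x)=2a^{x+2}\sum_{r=0}^{n-x}\binom{n+3}{n-x-r}\binom{x+r}{r}(-1)^r a^r-(n-x+1)(n+3)a+(n-x+1)(x+1).$$ (2) $\frac{x+1}{n+3}<\hat p_{IB}(x)<\frac{x+2}{n+3}$ for $x=0,1,\dots,n$; more precisely, $\frac{x+1}{n+2}<\hat p_{IB}(x)<\frac{x+2}{n+3}$ for $x<\frac n2$, and $\frac{x+1}{n+3}<\hat p_{IB}(x)<\frac{x+1}{n+2}$ for $x>\frac n2$.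
   Context: $B(n,p)$ is the binomial distribution with $n$ trials and success probability $p\in(0,1)$. The fixed point $\hat p_{IB}(x)$ of $g$ in $(0,1)$ (the "iterative Bayes estimate") exists and is unique. *)

theory Defs
  imports "HOL-Analysis.Analysis"
begin

definition g_tri :: "nat \<Rightarrow> nat \<Rightarrow> real \<Rightarrow> real" where
  "g_tri n x \<alpha> =
    ((2 / \<alpha>) * integral {0..\<alpha>} (\<lambda>p. p ^ (x + 2) * (1 - p) ^ (n - x))
      + (2 / (1 - \<alpha>)) * integral {\<alpha>..1} (\<lambda>p. p ^ (x + 1) * (1 - p) ^ (n - x + 1)))
    / ((2 / \<alpha>) * integral {0..\<alpha>} (\<lambda>p. p ^ (x + 1) * (1 - p) ^ (n - x))
      + (2 / (1 - \<alpha>)) * integral {\<alpha>..1} (\<lambda>p. p ^ x * (1 - p) ^ (n - x + 1)))"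

definition p_IB :: "nat \<Rightarrow> nat \<Rightarrow> real" where
  "p_IB n x = (THE \<tau>. \<tau> \<in> {0<..<1} \<and> g_tri n x \<tau> = \<tau>)"

definition J_poly :: "nat \<Rightarrow> nat \<Rightarrow> real \<Rightarrow> real" where
  "J_poly n x a =
     2 * a ^ (x + 2) * (\<Sum>r = 0..n - x. real ((n + 3) choose (n - x - r)) * real ((x + r) choose r)
                                          * (-1) ^ r * a ^ r)
     - real (n - x + 1) * real (n + 3) * a + real (n - x + 1) * real (x + 1)"

end

theory Submission
  imports Defs
begin

text \<open>Clearing denominators, \<open>g(\<alpha>) = \<alpha>\<close> exactly when the mean defect
\<open>F(\<alpha>) = \<alpha>(1-\<alpha>)/2 \<cdot> \<integral> (p-\<alpha>) \<pi>\<^sub>\<alpha>(p) p\<^sup>x (1-p)\<^sup>n\<^sup>-\<^sup>x dp\<close> vanishes, \<open>\<pi>\<^sub>\<alpha>\<close> being the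
triangle prior. Its third derivative is \<open>2 \<alpha>\<^sup>x (1-\<alpha>)\<^sup>n\<^sup>-\<^sup>x\<close>, and it agrees with
\<open>x! (n-x)! / (n+3)! \<cdot> \<alpha> \<cdot> J\<^sub>n(\<alpha>,x)\<close> to second order at \<open>0\<close>, so the two coincide on \<open>[0,1]\<close>;
this is part (1).

For part (2) the sign of \<open>F\<close> is determined at three points. At \<open>(x+1)/(n+3)\<close> and
\<open>(x+2)/(n+3)\<close>, the means of \<open>Beta(x+1, n-x+2)\<close> and \<open>Beta(x+2, n-x+1)\<close>, one of the two
integrals can be moved across \<open>\<alpha>\<close> and \<open>F\<close> collapses to \<open>\<plusminus>\<integral> p\<^sup>x (1-p)\<^sup>n\<^sup>-\<^sup>x (p-\<alpha>)\<^sup>2\<close> over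
one side of \<open>\<alpha>\<close>. At \<open>(x+1)/(n+2)\<close>, the mode of the kernel \<open>p\<^sup>x\<^sup>+\<^sup>1 (1-p)\<^sup>n\<^sup>-\<^sup>x\<^sup>+\<^sup>1\<close>,
integration by parts turns \<open>F\<close> into a comparison of the kernel at mirrored points about its
mode, and the skewness of the kernel gives \<open>F\<close> the sign of \<open>n - 2x\<close>. A sign change of \<open>J\<close>
between two such points, together with the uniqueness of the fixed point, locates \<open>p_IB\<close>.\<close>

lemma has_integral_beta_nat:
  "((\<lambda>p::real. p ^ a * (1 - p) ^ b) has_integral (fact a * fact b / fact (a + b + 1))) {0..1}"
proof -
  have "Beta (real (a + 1)) (real (b + 1)) = fact a * fact b / fact (a + b + 1)"
    using Gamma_fact[of a, where 'a = real] Gamma_fact[of b, where 'a = real]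
      Gamma_fact[of "a + b + 1", where 'a = real]
    by (simp add: Beta_def add_ac)
  moreover have "((\<lambda>p::real. p ^ a * (1 - p) ^ b) has_integral Beta (real (a + 1)) (real (b + 1))) {0<..<1}"
    using has_integral_Beta_real[of "real (a + 1)" "real (b + 1)"]
    by (subst has_integral_cong[where g = "\<lambda>t. t powr (real (a + 1) - 1) * (1 - t) powr (real (b + 1) - 1)"])
       (auto simp: powr_realpow has_integral_Icc_iff_Ioo)
  ultimately show ?thesis by (simp add: has_integral_Icc_iff_Ioo)
qed

lemma has_integral_beta_nat_centered:
  "((\<lambda>p::real. p ^ a * (1 - p) ^ b * (p - (real a + 1) / (real a + real b + 2))) has_integral 0) {0..1}"
proof -
  define c where "c = (real a + 1) / (real a + real b + 2)"
  have "((\<lambda>p::real. p ^ (a + 1) * (1 - p) ^ b - c * (p ^ a * (1 - p) ^ b)) has_integral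
      fact (a + 1) * fact b / fact (a + 1 + b + 1) - c * (fact a * fact b / fact (a + b + 1))) {0..1}"
    by (intro has_integral_diff has_integral_mult_right has_integral_beta_nat)
  moreover have "fact (a + 1) * fact b / fact (a + 1 + b + 1) = c * (fact a * fact b / (fact (a + b + 1) :: real))"
    using fact_Suc[of a, where 'a = real] fact_Suc[of "a + b + 1", where 'a = real]
    by (simp add: c_def field_simps)
  ultimately show ?thesis
    by (simp add: c_def algebra_simps)
qed

lemma has_integral_real_derivative:
  fixes V V' :: "real \<Rightarrow> real"
  assumes "a \<le> b" "\<And>p. (V has_real_derivative V' p) (at p)"
  shows "(V' has_integral (V b - V a)) {a..b}"
  using assms by (intro fundamental_theorem_of_calculus)
     (auto simp: has_real_derivative_iff_has_vector_derivative[symmetric] intro: has_field_derivative_at_within)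

lemma integral_combine_diff:
  fixes f :: "real \<Rightarrow> real"
  assumes "a \<le> c" "c \<le> b" "continuous_on {a..b} f"
  shows "integral {c..b} f = integral {a..b} f - integral {a..c} f"
  using Henstock_Kurzweil_Integration.integral_combine[OF assms(1,2) integrable_continuous_interval[OF assms(3)]]
  by simp

lemma integral_has_real_derivative_interior:
  fixes f :: "real \<Rightarrow> real"
  assumes "continuous_on {a..b} f" "a < u" "u < b"
  shows "((\<lambda>t. integral {a..t} f) has_real_derivative f u) (at u)"
proof -
  have "((\<lambda>t. integral {a..t} f) has_real_derivative f u) (at u within {a..b})"
    using assms by (intro integral_has_real_derivative) auto
  moreover have "at u within {a..b} = at u"
    using assms by (intro at_within_interior) auto
  ultimately show ?thesis by simp
qed

lemma integral_pos_real:
  fixes f :: "real \<Rightarrow> real"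
  assumes "a < b" "continuous_on {a..b} f" "\<And>t. a < t \<Longrightarrow> t < b \<Longrightarrow> 0 < f t"
  shows "0 < integral {a..b} f"
  using integral_less_real[of a b "\<lambda>_. 0" f] assms by simp

lemma integral_mult_shift:
  fixes f :: "real \<Rightarrow> real"
  assumes "continuous_on {a..b} f"
  shows "integral {a..b} (\<lambda>p. f p * (p - c)) = integral {a..b} (\<lambda>p. p * f p) - c * integral {a..b} f"
proof -
  have "integral {a..b} (\<lambda>p. f p * (p - c)) = integral {a..b} (\<lambda>p. p * f p - c * f p)"
    by (simp add: algebra_simps)
  also have "\<dots> = integral {a..b} (\<lambda>p. p * f p) - c * integral {a..b} f"
    using assms by (simp add: integral_diff integrable_continuous_interval continuous_intros)
  finally show ?thesis .
qed

lemma zero_by_third_derivative: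
  fixes d d' d'' :: "real \<Rightarrow> real"
  assumes "convex S" "a \<in> S" "t \<in> S"
    and "\<And>u. u \<in> S \<Longrightarrow> (d has_real_derivative d' u) (at u within S)"
    and "\<And>u. u \<in> S \<Longrightarrow> (d' has_real_derivative d'' u) (at u within S)"
    and "\<And>u. u \<in> S \<Longrightarrow> (d'' has_real_derivative 0) (at u within S)"
    and "d a = 0" "d' a = 0" "d'' a = 0"
  shows "d t = 0"
proof -
  have const: "e u = e a" if "\<And>u. u \<in> S \<Longrightarrow> (e has_real_derivative 0) (at u within S)" "u \<in> S"
    for e :: "real \<Rightarrow> real" and u
    using has_field_derivative_zero_constant[OF assms(1), of e] that assms(2) by metis
  have "d'' u = 0" if "u \<in> S" for u
    using const[of d'' u] assms(6,9) that by simp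
  then have "d' u = 0" if "u \<in> S" for u
    using const[of d' u] assms(5,8) that by simp
  then show ?thesis
    using const[of d t] assms(3,4,7) by simp
qed

lemma mean_right_less_mean_left:
  fixes f :: "real \<Rightarrow> real"
  assumes \<alpha>: "0 < \<alpha>" "\<alpha> < 1" and f: "continuous_on {0..1} f"
    and less: "\<And>s. 0 < s \<Longrightarrow> s < 1 \<Longrightarrow> f (\<alpha> + (1 - \<alpha>) * s) < f (\<alpha> * (1 - s))"
  shows "\<alpha> * integral {\<alpha>..1} f < (1 - \<alpha>) * integral {0..\<alpha>} f"
proof -
  define T where "T u = integral {0..u} f" for u
  define l where "l s = \<alpha> * (1 - s)" for s
  define r where "r s = \<alpha> + (1 - \<alpha>) * s" for s
  define H where "H s = (1 - \<alpha>) * (T \<alpha> - T (l s)) - \<alpha> * (T (r s) - T \<alpha>)" for s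
  have l01: "l s \<in> {0..1}" and r01: "r s \<in> {0..1}" if "s \<in> {0..1}" for s
  proof -
    have bounds: "0 \<le> \<alpha> * (1 - s)" "\<alpha> * (1 - s) \<le> \<alpha>" "0 \<le> (1 - \<alpha>) * s" "(1 - \<alpha>) * s \<le> 1 - \<alpha>"
      using that \<alpha> by (auto intro: mult_left_le)
    show "l s \<in> {0..1}" using bounds \<alpha> unfolding l_def atLeastAtMost_iff by (intro conjI; linarith)
    show "r s \<in> {0..1}" using bounds \<alpha> unfolding r_def atLeastAtMost_iff by (intro conjI; linarith)
  qed
  have T': "(T has_real_derivative f u) (at u)" if "0 < u" "u < 1" for u
    unfolding T_def[abs_def] using f that by (rule integral_has_real_derivative_interior)
  have "H 0 < H 1"
  proof (rule DERIV_pos_imp_increasing_open, simp)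
    fix s :: real assume s: "0 < s" "s < 1"
    have "0 < \<alpha> * s" "0 < (1 - \<alpha>) * (1 - s)" "0 < \<alpha> * (1 - s)" "0 < (1 - \<alpha>) * s"
      using s \<alpha> by simp_all
    then have "0 < l s" "l s < 1" "0 < r s" "r s < 1"
      using \<alpha> unfolding l_def r_def by (simp_all add: algebra_simps)
    have "((\<lambda>s. T (l s)) has_real_derivative f (l s) * (- \<alpha>)) (at s)"
      using \<open>0 < l s\<close> \<open>l s < 1\<close> unfolding l_def
      by (intro DERIV_chain2[OF T']) (auto intro!: derivative_eq_intros)
    moreover have "((\<lambda>s. T (r s)) has_real_derivative f (r s) * (1 - \<alpha>)) (at s)"
      using \<open>0 < r s\<close> \<open>r s < 1\<close> unfolding r_def
      by (intro DERIV_chain2[OF T']) (auto intro!: derivative_eq_intros)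
    ultimately have "(H has_real_derivative
        (1 - \<alpha>) * (0 - f (l s) * (- \<alpha>)) - \<alpha> * (f (r s) * (1 - \<alpha>) - 0)) (at s)"
      unfolding H_def[abs_def] by (intro DERIV_diff DERIV_cmult DERIV_const)
    then have "(H has_real_derivative \<alpha> * (1 - \<alpha>) * (f (l s) - f (r s))) (at s)"
      by (simp add: algebra_simps)
    moreover have "0 < \<alpha> * (1 - \<alpha>) * (f (l s) - f (r s))"
      using less[OF s] \<alpha> by (simp add: l_def r_def)
    ultimately show "\<exists>y. (H has_real_derivative y) (at s) \<and> 0 < y" by blast
  next
    have "continuous_on {0..1} T"
      unfolding T_def by (intro indefinite_integral_continuous_1 integrable_continuous_interval f)
    then have "continuous_on {0..1} (T \<circ> l)" "continuous_on {0..1} (T \<circ> r)"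
      using l01 r01 unfolding l_def r_def
      by (auto intro!: continuous_on_compose2[where g = T and t = "{0..1}"] continuous_intros simp: o_def)
    then show "continuous_on {0..1} H"
      unfolding H_def by (auto intro!: continuous_intros simp: o_def)
  qed
  moreover have "integral {\<alpha>..1} f = T 1 - T \<alpha>"
    using integral_combine_diff[of 0 \<alpha> 1 f] \<alpha> f by (simp add: T_def)
  moreover have "H 0 = 0" "H 1 = (1 - \<alpha>) * T \<alpha> - \<alpha> * (T 1 - T \<alpha>)"
    by (simp_all add: H_def l_def r_def T_def)
  ultimately show ?thesis by (simp add: T_def)
qed

section \<open>Beta kernels at mirrored points around the mode\<close>

lemma beta_kernel_has_real_derivative:
  fixes a b :: nat
  shows "((\<lambda>p. p ^ (a + 1) * (1 - p) ^ (b + 1)) has_real_derivative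
      - (real a + b + 2) * (p ^ a * (1 - p) ^ b * (p - (real a + 1) / (real a + b + 2)))) (at p)"
proof -
  have "((\<lambda>p. p ^ (a + 1) * (1 - p) ^ (b + 1)) has_real_derivative
      (a + 1) * p ^ a * (1 - p) ^ (b + 1) + p ^ (a + 1) * ((b + 1) * (1 - p) ^ b * - 1)) (at p)"
  proof -
    have "((\<lambda>p. 1 - p) has_real_derivative - 1) (at p)"
      using DERIV_diff[OF DERIV_const[of 1] DERIV_ident] by simp
    from DERIV_power[OF this, of "b + 1"]
    have d2: "((\<lambda>p. (1 - p) ^ (b + 1)) has_real_derivative (b + 1) * (1 - p) ^ b * - 1) (at p)"
      by simp
    have d1: "((\<lambda>p. p ^ (a + 1)) has_real_derivative (a + 1) * p ^ a) (at p)"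
      using DERIV_pow[of "a + 1" p] by simp
    show ?thesis
      using DERIV_mult[OF d1 d2] by (simp add: algebra_simps)
  qed
  moreover have "(a + 1) * p ^ a * (1 - p) ^ (b + 1) + p ^ (a + 1) * ((b + 1) * (1 - p) ^ b * - 1)
      = - (real a + b + 2) * (p ^ a * (1 - p) ^ b * (p - (real a + 1) / (real a + b + 2)))"
    by (simp add: field_simps)
  ultimately show ?thesis by simp
qed

lemma mirror_power_less:
  fixes a b :: nat and s :: real
  assumes ab: "0 < a" "a < b" and s: "0 < s" "s < 1"
  shows "(a + b * s) ^ a * (b * (1 - s)) ^ b < (a * (1 - s)) ^ a * (b + a * s) ^ b"
proof -
  define \<phi> where "\<phi> t = (real a - b) * ln (1 - t) + b * ln (b + a * t) - a * ln (a + b * t)"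
    for t :: real
  have pos: "0 < 1 - t" "0 < b + a * t" "0 < a + b * t" if "0 \<le> t" "t < 1" for t :: real
    using that ab by (auto intro: add_pos_nonneg)
  have "\<phi> 0 < \<phi> s"
  proof (rule DERIV_pos_imp_increasing_open[OF s(1)])
    fix t assume t: "0 < t" "t < s"
    have p: "0 < 1 - t" "0 < b + a * t" "0 < a + b * t" using pos[of t] t s by auto
    have "((\<lambda>t. ln (1 - t)) has_real_derivative - 1 / (1 - t)) (at t)"
      "((\<lambda>t. ln (b + a * t)) has_real_derivative a / (b + a * t)) (at t)"
      "((\<lambda>t. ln (a + b * t)) has_real_derivative b / (a + b * t)) (at t)"
      using p by (auto intro!: derivative_eq_intros)
    then have "(\<phi> has_real_derivative
        (real a - b) * (- 1 / (1 - t)) + b * (a / (b + a * t)) - a * (b / (a + b * t))) (at t)"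
      unfolding \<phi>_def by (intro DERIV_diff DERIV_add DERIV_cmult)
    moreover have "0 < (real a - b) * (- 1 / (1 - t)) + b * (a / (b + a * t)) - a * (b / (a + b * t))"
    proof -
      have "(1 - t) ^ 2 < 1" using t s by (simp add: power_less_one_iff)
      then have "real a * b * (1 - t) ^ 2 < a * b" using ab by simp
      also have "\<dots> \<le> (b + a * t) * (a + b * t)" using t by (simp add: algebra_simps)
      finally have "0 < (real b - a) * ((b + a * t) * (a + b * t) - real a * b * (1 - t) ^ 2)
          / ((1 - t) * ((b + a * t) * (a + b * t)))"
        using p ab by (intro divide_pos_pos mult_pos_pos) auto
      also have "\<dots> = (real a - b) * (- 1 / (1 - t)) + b * (a / (b + a * t)) - a * (b / (a + b * t))"
        using p by (simp add: divide_simps) (simp add: algebra_simps power2_eq_square)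
      finally show ?thesis .
    qed
    ultimately show "\<exists>y. (\<phi> has_real_derivative y) (at t) \<and> 0 < y" by blast
  next
    have "isCont \<phi> t" if "t \<in> {0..s}" for t
      using pos[of t] that s unfolding \<phi>_def by (auto intro!: continuous_intros)
    then show "continuous_on {0..s} \<phi>" by (simp add: continuous_at_imp_continuous_on)
  qed
  moreover have "ln ((a + b * s) ^ a * (b * (1 - s)) ^ b) = a * ln (a + b * s) + b * (ln b + ln (1 - s))"
    "ln ((a * (1 - s)) ^ a * (b + a * s) ^ b) = a * (ln a + ln (1 - s)) + b * ln (b + a * s)"
    using pos[of s] s ab by (simp_all add: ln_mult ln_realpow)
  ultimately have "ln ((a + b * s) ^ a * (b * (1 - s)) ^ b) < ln ((a * (1 - s)) ^ a * (b + a * s) ^ b)"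
    by (simp add: \<phi>_def algebra_simps)
  then show ?thesis
    using pos[of s] s ab by simp
qed

lemma beta_kernel_at_mirror_points:
  fixes a b :: nat and s :: real
  assumes "0 < a + b"
  defines "M \<equiv> a / (a + b)"
  shows "(M * (1 - s)) ^ a * (1 - M * (1 - s)) ^ b = (a * (1 - s)) ^ a * (b + a * s) ^ b / (a + b) ^ (a + b)"
    and "(M + (1 - M) * s) ^ a * (1 - (M + (1 - M) * s)) ^ b = (a + b * s) ^ a * (b * (1 - s)) ^ b / (a + b) ^ (a + b)"
proof -
  have N: "real a + b \<noteq> 0" using assms(1) by linarith
  have "1 - M = b / (a + b)"
    using N by (simp add: M_def field_simps)
  then have R: "M + (1 - M) * s = (a + b * s) / (a + b)"
    by (simp add: M_def add_divide_distrib)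
  have "M * (1 - s) = a * (1 - s) / (a + b)" "1 - M * (1 - s) = (b + a * s) / (a + b)"
    "1 - (M + (1 - M) * s) = b * (1 - s) / (a + b)"
    using N unfolding R by (simp_all add: M_def field_simps)
  with R show "(M * (1 - s)) ^ a * (1 - M * (1 - s)) ^ b = (a * (1 - s)) ^ a * (b + a * s) ^ b / (a + b) ^ (a + b)"
    and "(M + (1 - M) * s) ^ a * (1 - (M + (1 - M) * s)) ^ b = (a + b * s) ^ a * (b * (1 - s)) ^ b / (a + b) ^ (a + b)"
    by (simp_all add: power_divide power_add)
qed

lemma beta_kernel_mirror_less:
  fixes a b :: nat and s :: real
  assumes "0 < a" "a < b" "0 < s" "s < 1"
  defines "M \<equiv> a / (a + b)"
  shows "(M + (1 - M) * s) ^ a * (1 - (M + (1 - M) * s)) ^ b < (M * (1 - s)) ^ a * (1 - M * (1 - s)) ^ b"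
  using mirror_power_less[OF assms(1-4)] beta_kernel_at_mirror_points[of a b s] assms(1)
  by (simp add: M_def divide_strict_right_mono)

lemma beta_kernel_mirror_greater:
  fixes a b :: nat and s :: real
  assumes "0 < b" "b < a" "0 < s" "s < 1"
  defines "M \<equiv> a / (a + b)"
  shows "(M * (1 - s)) ^ a * (1 - M * (1 - s)) ^ b < (M + (1 - M) * s) ^ a * (1 - (M + (1 - M) * s)) ^ b"
  using mirror_power_less[OF assms(1-4)] beta_kernel_at_mirror_points[of a b s] assms(1)
  by (simp add: M_def divide_strict_right_mono mult.commute)

section \<open>The mean defect of the triangle prior\<close>

text \<open>\<open>\<alpha>(1-\<alpha>)/2\<close> times the unnormalised posterior mean of \<open>p - \<alpha>\<close>, with \<open>m = n - x\<close>.\<close>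

definition mean_defect :: "nat \<Rightarrow> nat \<Rightarrow> real \<Rightarrow> real" where
  "mean_defect x m \<alpha> =
     (1 - \<alpha>) * integral {0..\<alpha>} (\<lambda>p. p ^ (x + 1) * (1 - p) ^ m * (p - \<alpha>))
     + \<alpha> * integral {\<alpha>..1} (\<lambda>p. p ^ x * (1 - p) ^ (m + 1) * (p - \<alpha>))"

lemma mean_defect_eq_moments:
  "mean_defect x m \<alpha> =
     (1 - \<alpha>) * (integral {0..\<alpha>} (\<lambda>p. p ^ (x + 2) * (1 - p) ^ m)
                 - \<alpha> * integral {0..\<alpha>} (\<lambda>p. p ^ (x + 1) * (1 - p) ^ m))
     + \<alpha> * (integral {\<alpha>..1} (\<lambda>p. p ^ (x + 1) * (1 - p) ^ (m + 1))
           - \<alpha> * integral {\<alpha>..1} (\<lambda>p. p ^ x * (1 - p) ^ (m + 1)))"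
  unfolding mean_defect_def
  by (subst (1 2) integral_mult_shift) (auto intro!: continuous_intros simp: mult_ac)

lemma g_tri_eq_iff_mean_defect:
  assumes "0 < \<alpha>" "\<alpha> < 1"
  shows "g_tri (x + m) x \<alpha> = \<alpha> \<longleftrightarrow> mean_defect x m \<alpha> = 0"
proof -
  define I1 where "I1 = integral {0..\<alpha>} (\<lambda>p. p ^ (x + 2) * (1 - p) ^ m)"
  define I2 where "I2 = integral {\<alpha>..1} (\<lambda>p. p ^ (x + 1) * (1 - p) ^ (m + 1))"
  define I3 where "I3 = integral {0..\<alpha>} (\<lambda>p. p ^ (x + 1) * (1 - p) ^ m)"
  define I4 where "I4 = integral {\<alpha>..1} (\<lambda>p. p ^ x * (1 - p) ^ (m + 1))"
  have "0 < I3" "0 < I4"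
    unfolding I3_def I4_def using assms by (auto intro!: integral_pos_real continuous_intros)
  then have D: "0 < (2 / \<alpha>) * I3 + (2 / (1 - \<alpha>)) * I4"
    using assms by (intro add_pos_pos mult_pos_pos) auto
  have "g_tri (x + m) x \<alpha> = ((2 / \<alpha>) * I1 + (2 / (1 - \<alpha>)) * I2) / ((2 / \<alpha>) * I3 + (2 / (1 - \<alpha>)) * I4)"
    by (simp add: g_tri_def I1_def I2_def I3_def I4_def)
  also have "\<dots> = \<alpha> \<longleftrightarrow> (1 - \<alpha>) * (I1 - \<alpha> * I3) + \<alpha> * (I2 - \<alpha> * I4) = 0"
    using D assms by (simp add: divide_eq_eq) (auto simp: field_simps)
  finally show ?thesis
    by (simp add: mean_defect_eq_moments I1_def I2_def I3_def I4_def)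
qed

lemma mean_defect_eq_left_integral:
  assumes "0 \<le> \<alpha>" "\<alpha> \<le> 1"
    and "integral {0..1} (\<lambda>p. p ^ x * (1 - p) ^ (m + 1) * (p - \<alpha>)) = 0"
  shows "mean_defect x m \<alpha> = integral {0..\<alpha>} (\<lambda>p. p ^ x * (1 - p) ^ m * (p - \<alpha>) ^ 2)"
proof -
  have "integral {\<alpha>..1} (\<lambda>p. p ^ x * (1 - p) ^ (m + 1) * (p - \<alpha>))
      = - integral {0..\<alpha>} (\<lambda>p. p ^ x * (1 - p) ^ (m + 1) * (p - \<alpha>))"
    using assms by (subst integral_combine_diff[of 0]) (auto intro!: continuous_intros)
  then have "mean_defect x m \<alpha> = integral {0..\<alpha>} (\<lambda>p. (1 - \<alpha>) * (p ^ (x + 1) * (1 - p) ^ m * (p - \<alpha>))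
      - \<alpha> * (p ^ x * (1 - p) ^ (m + 1) * (p - \<alpha>)))"
    unfolding mean_defect_def
    by (subst integral_diff) (auto intro!: integrable_continuous_interval continuous_intros)
  also have "\<dots> = integral {0..\<alpha>} (\<lambda>p. p ^ x * (1 - p) ^ m * (p - \<alpha>) ^ 2)"
    by (rule integral_cong) (simp add: algebra_simps power2_eq_square)
  finally show ?thesis .
qed

lemma mean_defect_eq_right_integral:
  assumes "0 \<le> \<alpha>" "\<alpha> \<le> 1"
    and "integral {0..1} (\<lambda>p. p ^ (x + 1) * (1 - p) ^ m * (p - \<alpha>)) = 0"
  shows "mean_defect x m \<alpha> = - integral {\<alpha>..1} (\<lambda>p. p ^ x * (1 - p) ^ m * (p - \<alpha>) ^ 2)"
proof -
  have "integral {0..\<alpha>} (\<lambda>p. p ^ (x + 1) * (1 - p) ^ m * (p - \<alpha>))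
      = - integral {\<alpha>..1} (\<lambda>p. p ^ (x + 1) * (1 - p) ^ m * (p - \<alpha>))"
    using assms by (subst integral_combine_diff[of 0 \<alpha> 1]) (auto intro!: continuous_intros)
  then have "mean_defect x m \<alpha> = integral {\<alpha>..1} (\<lambda>p. \<alpha> * (p ^ x * (1 - p) ^ (m + 1) * (p - \<alpha>))
      - (1 - \<alpha>) * (p ^ (x + 1) * (1 - p) ^ m * (p - \<alpha>)))"
    unfolding mean_defect_def
    by (subst integral_diff) (auto intro!: integrable_continuous_interval continuous_intros)
  also have "\<dots> = integral {\<alpha>..1} (\<lambda>p. - (p ^ x * (1 - p) ^ m * (p - \<alpha>) ^ 2))"
    by (rule integral_cong) (simp add: algebra_simps power2_eq_square)
  finally show ?thesis by simp
qed

lemma mean_defect_pos_at_lower_bound: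
  "0 < mean_defect x m ((real x + 1) / (real x + real m + 3))"
proof -
  define \<alpha> where "\<alpha> = (real x + 1) / (real x + real m + 3)"
  have \<alpha>: "0 < \<alpha>" "\<alpha> < 1" by (auto simp: \<alpha>_def field_simps)
  have "integral {0..1} (\<lambda>p. p ^ x * (1 - p) ^ (m + 1) * (p - \<alpha>)) = 0"
    using has_integral_beta_nat_centered[of x "m + 1"] by (simp add: \<alpha>_def add_ac integral_unique)
  then have "mean_defect x m \<alpha> = integral {0..\<alpha>} (\<lambda>p. p ^ x * (1 - p) ^ m * (p - \<alpha>) ^ 2)"
    using \<alpha> by (intro mean_defect_eq_left_integral) auto
  also have "0 < \<dots>"
    using \<alpha> by (intro integral_pos_real continuous_intros) auto
  finally show ?thesis by (simp add: \<alpha>_def)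
qed

lemma mean_defect_neg_at_upper_bound:
  "mean_defect x m ((real x + 2) / (real x + real m + 3)) < 0"
proof -
  define \<alpha> where "\<alpha> = (real x + 2) / (real x + real m + 3)"
  have \<alpha>: "0 < \<alpha>" "\<alpha> < 1" by (auto simp: \<alpha>_def field_simps)
  have "integral {0..1} (\<lambda>p. p ^ (x + 1) * (1 - p) ^ m * (p - \<alpha>)) = 0"
    using has_integral_beta_nat_centered[of "x + 1" m] by (simp add: \<alpha>_def add_ac integral_unique)
  then have "mean_defect x m \<alpha> = - integral {\<alpha>..1} (\<lambda>p. p ^ x * (1 - p) ^ m * (p - \<alpha>) ^ 2)"
    using \<alpha> by (intro mean_defect_eq_right_integral) auto
  also have "\<dots> < 0"
    using \<alpha> by (simp, intro integral_pos_real continuous_intros) auto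
  finally show ?thesis by (simp add: \<alpha>_def)
qed

lemma mean_defect_at_mode:
  fixes x m :: nat
  defines "M \<equiv> (real x + 1) / (real x + real m + 2)"
    and "v \<equiv> \<lambda>p. p ^ (x + 1) * (1 - p) ^ (m + 1)"
  shows "mean_defect x m M = ((1 - M) * integral {0..M} v - M * integral {M..1} v) / (real x + real m + 2)"
proof -
  define N where "N = real x + real m + 2"
  have N: "0 < N" by (simp add: N_def)
  have M: "0 < M" "M < 1" by (auto simp: M_def field_simps)
  define v' where "v' p = - N * (p ^ x * (1 - p) ^ m * (p - M))" for p
  have v': "(v has_real_derivative v' p) (at p)" for p
    using beta_kernel_has_real_derivative[of x m p] by (simp add: v_def v'_def N_def M_def add_ac)
  have "((\<lambda>p. 1 * v p + v' p * p) has_integral M * v M - 0 * v 0) {0..M}"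
    using M by (intro has_integral_real_derivative DERIV_mult DERIV_ident v') simp
  then have "((\<lambda>p. (1 / N) * (v p - (1 * v p + v' p * p)))
      has_integral (1 / N) * (integral {0..M} v - M * v M)) {0..M}"
    by (intro has_integral_mult_right has_integral_diff integrable_integral)
      (auto simp: v_def intro!: integrable_continuous_interval continuous_intros)
  then have left: "integral {0..M} (\<lambda>p. p ^ (x + 1) * (1 - p) ^ m * (p - M))
      = (integral {0..M} v - M * v M) / N"
    using N by (intro integral_unique) (simp add: v'_def algebra_simps diff_divide_distrib)
  have "((\<lambda>p. (0 - 1) * v p + v' p * (1 - p)) has_integral (1 - 1) * v 1 - (1 - M) * v M) {M..1}"
    using M by (intro has_integral_real_derivative DERIV_mult DERIV_diff DERIV_const DERIV_ident v') simp
  then have "((\<lambda>p. (- 1 / N) * (((0 - 1) * v p + v' p * (1 - p)) + v p))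
      has_integral (- 1 / N) * (((1 - 1) * v 1 - (1 - M) * v M) + integral {M..1} v)) {M..1}"
    by (intro has_integral_mult_right has_integral_add integrable_integral)
      (auto simp: v_def intro!: integrable_continuous_interval continuous_intros)
  then have right: "integral {M..1} (\<lambda>p. p ^ x * (1 - p) ^ (m + 1) * (p - M))
      = ((1 - M) * v M - integral {M..1} v) / N"
    using N by (intro integral_unique) (simp add: v'_def algebra_simps diff_divide_distrib add_divide_distrib)
  show ?thesis
    unfolding mean_defect_def left right N_def[symmetric] using N by (simp add: field_simps)
qed

lemma mean_defect_sign_at_mode:
  fixes x m :: nat
  defines "M \<equiv> (real x + 1) / (real x + real m + 2)"
  shows "x < m \<Longrightarrow> 0 < mean_defect x m M" and "m < x \<Longrightarrow> mean_defect x m M < 0"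
proof -
  define v where "v p = p ^ (x + 1) * (1 - p) ^ (m + 1)" for p :: real
  have M_eq: "M = real (x + 1) / (real (x + 1) + real (m + 1))"
    by (simp add: M_def add_ac)
  have M: "0 < M" "M < 1" by (auto simp: M_def field_simps)
  have v: "continuous_on {0..1} v" "continuous_on {0..1} (\<lambda>p. - v p)"
    unfolding v_def by (auto intro!: continuous_intros)
  have defect: "mean_defect x m M = ((1 - M) * integral {0..M} v - M * integral {M..1} v) / (real x + real m + 2)"
    unfolding M_def v_def[abs_def] by (rule mean_defect_at_mode)
  show "0 < mean_defect x m M" if "x < m"
  proof -
    have "M * integral {M..1} v < (1 - M) * integral {0..M} v"
      using M v(1) beta_kernel_mirror_less[of "x + 1" "m + 1"] that
      by (intro mean_right_less_mean_left) (auto simp: v_def M_eq)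
    then show ?thesis unfolding defect by simp
  qed
  show "mean_defect x m M < 0" if "m < x"
  proof -
    have "M * integral {M..1} (\<lambda>p. - v p) < (1 - M) * integral {0..M} (\<lambda>p. - v p)"
      using M v(2) beta_kernel_mirror_greater[of "m + 1" "x + 1"] that
      by (intro mean_right_less_mean_left) (auto simp: v_def M_eq)
    then show ?thesis unfolding defect by (simp add: divide_neg_pos)
  qed
qed

section \<open>The mean defect as a multiple of \<open>J\<close>\<close>

definition inc_beta :: "nat \<Rightarrow> nat \<Rightarrow> real \<Rightarrow> real" where
  "inc_beta a b t = integral {0..t} (\<lambda>p. p ^ a * (1 - p) ^ b)"

lemma inc_beta_has_real_derivative:
  "t \<in> {0..1} \<Longrightarrow> (inc_beta a b has_real_derivative t ^ a * (1 - t) ^ b) (at t within {0..1})"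
  unfolding inc_beta_def[abs_def] by (intro integral_has_real_derivative continuous_intros)

lemma inc_beta_0 [simp]: "inc_beta a b 0 = 0"
  by (simp add: inc_beta_def)

lemma inc_beta_1: "inc_beta a b 1 = fact a * fact b / fact (a + b + 1)"
  unfolding inc_beta_def by (rule integral_unique[OF has_integral_beta_nat])

lemma mean_defect_eq_inc_beta:
  assumes "t \<in> {0..1}"
  shows "mean_defect x m t =
    (1 - t) * (inc_beta (x + 2) m t - t * inc_beta (x + 1) m t)
    + t * ((inc_beta (x + 1) (m + 1) 1 - inc_beta (x + 1) (m + 1) t)
           - t * (inc_beta x (m + 1) 1 - inc_beta x (m + 1) t))"
  using assms unfolding mean_defect_eq_moments inc_beta_def
  by (subst (1 2) integral_combine_diff[of 0 t 1]) (auto intro!: continuous_intros)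

definition mean_defect_d1 :: "nat \<Rightarrow> nat \<Rightarrow> real \<Rightarrow> real" where
  "mean_defect_d1 x m t =
    - inc_beta (x + 2) m t - inc_beta (x + 1) (m + 1) t + (2 * t - 1) * inc_beta (x + 1) m t
    + 2 * t * inc_beta x (m + 1) t + inc_beta (x + 1) (m + 1) 1 - 2 * t * inc_beta x (m + 1) 1"

definition mean_defect_d2 :: "nat \<Rightarrow> nat \<Rightarrow> real \<Rightarrow> real" where
  "mean_defect_d2 x m t = 2 * inc_beta (x + 1) m t + 2 * inc_beta x (m + 1) t - 2 * inc_beta x (m + 1) 1"

lemma mean_defect_derivatives:
  assumes t: "t \<in> {0..1}"
  shows "(mean_defect x m has_real_derivative mean_defect_d1 x m t) (at t within {0..1})"
    and "(mean_defect_d1 x m has_real_derivative mean_defect_d2 x m t) (at t within {0..1})"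
    and "(mean_defect_d2 x m has_real_derivative 2 * t ^ x * (1 - t) ^ m) (at t within {0..1})"
proof -
  note d = inc_beta_has_real_derivative[OF t]
  have w: "t ^ (x + 2) * (1 - t) ^ m = t * (t ^ (x + 1) * (1 - t) ^ m)"
    "t ^ (x + 1) * (1 - t) ^ (m + 1) = t * (t ^ x * (1 - t) ^ (m + 1))"
    "t ^ (x + 1) * (1 - t) ^ (m + 1) = (1 - t) * (t ^ (x + 1) * (1 - t) ^ m)"
    "t ^ (x + 1) * (1 - t) ^ m + t ^ x * (1 - t) ^ (m + 1) = t ^ x * (1 - t) ^ m"
    by (simp_all add: algebra_simps)
  have "((\<lambda>t. (1 - t) * (inc_beta (x + 2) m t - t * inc_beta (x + 1) m t)
      + t * ((inc_beta (x + 1) (m + 1) 1 - inc_beta (x + 1) (m + 1) t)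
             - t * (inc_beta x (m + 1) 1 - inc_beta x (m + 1) t)))
      has_real_derivative mean_defect_d1 x m t) (at t within {0..1})"
    unfolding mean_defect_d1_def
    by (rule derivative_eq_intros d DERIV_const refl)+ (use w in \<open>simp add: algebra_simps\<close>)
  then show "(mean_defect x m has_real_derivative mean_defect_d1 x m t) (at t within {0..1})"
    using t by (rule has_field_derivative_transform_within[OF _ zero_less_one])
      (simp add: mean_defect_eq_inc_beta)
  show "(mean_defect_d1 x m has_real_derivative mean_defect_d2 x m t) (at t within {0..1})"
    unfolding mean_defect_d1_def[abs_def] mean_defect_d2_def
    by (rule derivative_eq_intros d DERIV_const refl)+ (use w in \<open>simp add: algebra_simps\<close>)
  show "(mean_defect_d2 x m has_real_derivative 2 * t ^ x * (1 - t) ^ m) (at t within {0..1})"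
    unfolding mean_defect_d2_def[abs_def]
    by (rule derivative_eq_intros d DERIV_const refl)+ (use w in \<open>simp add: algebra_simps\<close>)
qed

definition J_scale :: "nat \<Rightarrow> nat \<Rightarrow> real" where
  "J_scale x m = fact x * fact m / fact (x + m + 3)"

definition J_coeff :: "nat \<Rightarrow> nat \<Rightarrow> nat \<Rightarrow> real" where
  "J_coeff x m r = real ((x + m + 3) choose (m - r)) * real ((x + r) choose r) * (- 1) ^ r"

definition J_deriv1 :: "nat \<Rightarrow> nat \<Rightarrow> real \<Rightarrow> real" where
  "J_deriv1 x m a = J_scale x m * (2 * (\<Sum>r = 0..m. J_coeff x m r * real (x + r + 3) * a ^ (x + r + 2))
     - 2 * (real (m + 1) * real (x + m + 3)) * a + real (m + 1) * real (x + 1))"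

definition J_deriv2 :: "nat \<Rightarrow> nat \<Rightarrow> real \<Rightarrow> real" where
  "J_deriv2 x m a = J_scale x m * (2 * (\<Sum>r = 0..m. J_coeff x m r * real (x + r + 3) * real (x + r + 2) * a ^ (x + r + 1))
     - 2 * (real (m + 1) * real (x + m + 3)))"

lemma J_scale_times_J_poly:
  "J_scale x m * a * J_poly (x + m) x a = J_scale x m * (2 * (\<Sum>r = 0..m. J_coeff x m r * a ^ (x + r + 3))
     - real (m + 1) * real (x + m + 3) * a ^ 2 + real (m + 1) * real (x + 1) * a)"
proof -
  have "a * (2 * a ^ (x + 2) * (\<Sum>r = 0..m. real ((x + m + 3) choose (m - r)) * real ((x + r) choose r) * (- 1) ^ r * a ^ r))
      = 2 * (\<Sum>r = 0..m. J_coeff x m r * a ^ (x + r + 3))"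
    unfolding J_coeff_def sum_distrib_left
    by (intro sum.cong refl) (simp add: power_add mult_ac power3_eq_cube)
  then show ?thesis
    unfolding J_poly_def by (simp add: algebra_simps power2_eq_square)
qed

lemma J_scale_times_J_coeff:
  assumes "r \<le> m"
  shows "J_scale x m * (J_coeff x m r * real (x + r + 3) * real (x + r + 2) * real (x + r + 1))
    = real (m choose r) * (- 1) ^ r"
proof -
  have fact3: "(fact (x + r + 3) :: real) = real (x + r + 3) * real (x + r + 2) * real (x + r + 1) * fact (x + r)"
    by (simp add: numeral_3_eq_3 numeral_2_eq_2 algebra_simps)
  have b1: "real ((x + m + 3) choose (m - r)) = fact (x + m + 3) / (fact (m - r) * fact (x + r + 3))"
  proof -
    have "x + m + 3 - (m - r) = x + r + 3" using assms by simp
    then show ?thesis using binomial_fact[of "m - r" "x + m + 3", where 'a = real] by simp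
  qed
  have b2: "real ((x + r) choose r) = fact (x + r) / (fact r * fact x)"
    using binomial_fact[of r "x + r", where 'a = real] by simp
  have b3: "real (m choose r) = fact m / (fact r * fact (m - r))"
    using binomial_fact[of r m, where 'a = real] assms by simp
  show ?thesis
    unfolding J_scale_def J_coeff_def b1 b2 b3 fact3 by (simp add: divide_simps)
qed

lemma J_derivatives:
  shows "((\<lambda>a. J_scale x m * a * J_poly (x + m) x a) has_real_derivative J_deriv1 x m a) (at a)"
    and "(J_deriv1 x m has_real_derivative J_deriv2 x m a) (at a)"
    and "(J_deriv2 x m has_real_derivative 2 * a ^ x * (1 - a) ^ m) (at a)"
proof -
  show "((\<lambda>a. J_scale x m * a * J_poly (x + m) x a) has_real_derivative J_deriv1 x m a) (at a)"
    unfolding J_scale_times_J_poly J_deriv1_def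
    by (rule derivative_eq_intros DERIV_sum refl)+ (simp_all add: sum_distrib_left algebra_simps)
  show "(J_deriv1 x m has_real_derivative J_deriv2 x m a) (at a)"
    unfolding J_deriv1_def[abs_def] J_deriv2_def
    by (rule derivative_eq_intros DERIV_sum refl)+ (simp_all add: sum_distrib_left algebra_simps)
  have binomial: "(1 - a) ^ m = (\<Sum>r = 0..m. real (m choose r) * (- 1) ^ r * a ^ r)"
    using binomial_ring[of "- a" 1 m] by (simp add: atLeast0AtMost power_minus' mult.assoc)
  have "J_scale x m * (2 * (\<Sum>r = 0..m.
      J_coeff x m r * real (x + r + 3) * real (x + r + 2) * real (x + r + 1) * a ^ (x + r)))
    = 2 * (\<Sum>r = 0..m. J_scale x m
      * (J_coeff x m r * real (x + r + 3) * real (x + r + 2) * real (x + r + 1)) * a ^ (x + r))"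
    by (simp add: sum_distrib_left mult_ac)
  also have "\<dots> = 2 * (\<Sum>r = 0..m. real (m choose r) * (- 1) ^ r * a ^ (x + r))"
    by (intro arg_cong[where f = "\<lambda>z. 2 * z"] sum.cong refl) (simp only: J_scale_times_J_coeff atLeastAtMost_iff)
  also have "\<dots> = 2 * a ^ x * (1 - a) ^ m"
    unfolding binomial sum_distrib_left by (simp add: power_add mult_ac)
  finally have third: "J_scale x m * (2 * (\<Sum>r = 0..m.
      J_coeff x m r * real (x + r + 3) * real (x + r + 2) * real (x + r + 1) * a ^ (x + r)))
    = 2 * a ^ x * (1 - a) ^ m" .
  have "(J_deriv2 x m has_real_derivative J_scale x m * (2 * (\<Sum>r = 0..m.
      J_coeff x m r * real (x + r + 3) * real (x + r + 2) * real (x + r + 1) * a ^ (x + r)))) (at a)"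
    unfolding J_deriv2_def[abs_def]
    by (rule derivative_eq_intros DERIV_sum refl)+ (simp_all add: sum_distrib_left algebra_simps)
  then show "(J_deriv2 x m has_real_derivative 2 * a ^ x * (1 - a) ^ m) (at a)"
    by (simp only: third)
qed

lemma inc_beta_1_eq_J_scale:
  "inc_beta (x + 1) (m + 1) 1 = J_scale x m * (real (m + 1) * real (x + 1))"
  "inc_beta x (m + 1) 1 = J_scale x m * (real (m + 1) * real (x + m + 3))"
proof -
  define G :: real where "G = fact (x + m + 2)"
  define N where "N = real (x + m + 3)"
  have "Suc (x + m + 2) = x + m + 3" by simp
  then have F: "fact (x + m + 3) = N * G"
    using fact_Suc[of "x + m + 2", where 'a = real] by (simp only: G_def N_def)
  have G: "0 < G" "0 < N" by (simp_all add: G_def N_def)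
  have e: "x + 1 + (m + 1) + 1 = x + m + 3" "x + (m + 1) + 1 = x + m + 2" by simp_all
  have f: "(fact (x + 1) :: real) = real (x + 1) * fact x" "(fact (m + 1) :: real) = real (m + 1) * fact m"
    by simp_all
  show "inc_beta (x + 1) (m + 1) 1 = J_scale x m * (real (m + 1) * real (x + 1))"
    "inc_beta x (m + 1) 1 = J_scale x m * (real (m + 1) * real (x + m + 3))"
    using G unfolding inc_beta_1 J_scale_def e f F G_def[symmetric] N_def[symmetric]
    by (simp_all add: field_simps)
qed

lemma mean_defect_eq_J_poly:
  assumes "t \<in> {0..1}"
  shows "mean_defect x m t = J_scale x m * t * J_poly (x + m) x t"
proof -
  have "mean_defect x m t - J_scale x m * t * J_poly (x + m) x t = 0"
  proof (rule zero_by_third_derivative[where S = "{0..1}" and a = 0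
      and d = "\<lambda>s. mean_defect x m s - J_scale x m * s * J_poly (x + m) x s"
      and d' = "\<lambda>s. mean_defect_d1 x m s - J_deriv1 x m s"
      and d'' = "\<lambda>s. mean_defect_d2 x m s - J_deriv2 x m s"])
    show "mean_defect_d1 x m 0 - J_deriv1 x m 0 = 0"
      unfolding mean_defect_d1_def J_deriv1_def inc_beta_1_eq_J_scale(1)
      unfolding inc_beta_1_eq_J_scale(2) by simp
    show "mean_defect_d2 x m 0 - J_deriv2 x m 0 = 0"
      unfolding mean_defect_d2_def J_deriv2_def inc_beta_1_eq_J_scale by simp
  next
    fix u :: real assume u: "u \<in> {0..1}"
    show "((\<lambda>t. mean_defect x m t - J_scale x m * t * J_poly (x + m) x t) has_real_derivative
        mean_defect_d1 x m u - J_deriv1 x m u) (at u within {0..1})"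
      by (rule DERIV_diff[OF mean_defect_derivatives(1)[OF u] has_field_derivative_at_within[OF J_derivatives(1)]])
    show "((\<lambda>t. mean_defect_d1 x m t - J_deriv1 x m t) has_real_derivative
        mean_defect_d2 x m u - J_deriv2 x m u) (at u within {0..1})"
      by (rule DERIV_diff[OF mean_defect_derivatives(2)[OF u] has_field_derivative_at_within[OF J_derivatives(2)]])
    show "((\<lambda>t. mean_defect_d2 x m t - J_deriv2 x m t) has_real_derivative 0) (at u within {0..1})"
      using DERIV_diff[OF mean_defect_derivatives(3)[of u x m]
          has_field_derivative_at_within[OF J_derivatives(3)[of x m]]] u
      by simp
  qed (use assms in \<open>auto simp: mean_defect_def\<close>)
  then show ?thesis by simp
qed

section \<open>Locating the fixed point\<close>

lemma sgn_mean_defect: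
  assumes "0 < \<alpha>" "\<alpha> \<le> 1"
  shows "sgn (mean_defect x m \<alpha>) = sgn (J_poly (x + m) x \<alpha>)"
proof -
  have "0 < J_scale x m" by (simp add: J_scale_def)
  then show ?thesis
    using assms by (simp add: mean_defect_eq_J_poly sgn_mult)
qed

lemma J_poly_root_iff_p_IB:
  assumes "\<exists>!\<tau>. \<tau> \<in> {0<..<1} \<and> g_tri (x + m) x \<tau> = \<tau>"
  shows "a \<in> {0<..<1} \<and> J_poly (x + m) x a = 0 \<longleftrightarrow> a = p_IB (x + m) x"
proof -
  have fixed_iff_root: "g_tri (x + m) x a = a \<longleftrightarrow> J_poly (x + m) x a = 0" if "a \<in> {0<..<1}" for a
    using that sgn_mean_defect[of a x m] g_tri_eq_iff_mean_defect[of a x m] by (auto simp: sgn_0_0)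
  have "p_IB (x + m) x \<in> {0<..<1} \<and> g_tri (x + m) x (p_IB (x + m) x) = p_IB (x + m) x"
    unfolding p_IB_def by (rule theI'[OF assms])
  then show ?thesis
    using assms fixed_iff_root by blast
qed

lemma p_IB_between:
  assumes "\<exists>!\<tau>. \<tau> \<in> {0<..<1} \<and> g_tri (x + m) x \<tau> = \<tau>"
    and "0 < a" "a < b" "b < 1" "0 < mean_defect x m a" "mean_defect x m b < 0"
  shows "a < p_IB (x + m) x \<and> p_IB (x + m) x < b"
proof -
  have "0 < J_poly (x + m) x a" "J_poly (x + m) x b < 0"
    using assms(2-6) sgn_mean_defect[of a x m] sgn_mean_defect[of b x m] by (auto simp: sgn_if split: if_splits)
  moreover have "continuous_on {a..b} (J_poly (x + m) x)"
    unfolding J_poly_def[abs_def] by (intro continuous_intros)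
  ultimately obtain z where "a \<le> z" "z \<le> b" "J_poly (x + m) x z = 0"
    using IVT2'[of "J_poly (x + m) x" b 0 a] assms(3) by auto
  moreover from this have "z \<noteq> a" "z \<noteq> b"
    using \<open>0 < J_poly (x + m) x a\<close> \<open>J_poly (x + m) x b < 0\<close> by auto
  ultimately show ?thesis
    using J_poly_root_iff_p_IB[OF assms(1), of z] assms(2,4) by auto
qed

theorem theorem3:
  fixes n x :: nat
  assumes "n \<ge> 1" and "x \<le> n"
    and "\<exists>!\<tau>. \<tau> \<in> {0<..<1} \<and> g_tri n x \<tau> = \<tau>"
  shows "(\<forall>a::real. (a \<in> {0<..<1} \<and> J_poly n x a = 0) \<longleftrightarrow> a = p_IB n x)
    \<and> (real x + 1) / (real n + 3) < p_IB n x \<and> p_IB n x < (real x + 2) / (real n + 3)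
    \<and> (real x < real n / 2 \<longrightarrow>
         (real x + 1) / (real n + 2) < p_IB n x \<and> p_IB n x < (real x + 2) / (real n + 3))
    \<and> (real x > real n / 2 \<longrightarrow>
         (real x + 1) / (real n + 3) < p_IB n x \<and> p_IB n x < (real x + 1) / (real n + 2))"
proof -
  obtain m where n: "n = x + m" using assms(2) le_iff_add by blast
  define lower upper mode where "lower = (real x + 1) / (real x + real m + 3)"
    and "upper = (real x + 2) / (real x + real m + 3)" and "mode = (real x + 1) / (real x + real m + 2)"
  have order: "0 < lower" "lower < mode" "mode < upper" "upper < 1"
    by (auto simp: lower_def upper_def mode_def field_simps)
  note unique = assms(3)[unfolded n]
  note between = p_IB_between[OF unique]
  have "lower < p_IB n x \<and> p_IB n x < upper"
    using between[of lower upper] order mean_defect_pos_at_lower_bound mean_defect_neg_at_upper_bound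
    by (simp add: n lower_def upper_def)
  moreover have "mode < p_IB n x" if "x < m"
    using between[of mode upper] order mean_defect_sign_at_mode(1)[OF that] mean_defect_neg_at_upper_bound
    by (simp add: n mode_def upper_def)
  moreover have "p_IB n x < mode" if "m < x"
    using between[of lower mode] order mean_defect_sign_at_mode(2)[OF that] mean_defect_pos_at_lower_bound
    by (simp add: n mode_def lower_def)
  ultimately show ?thesis
    using J_poly_root_iff_p_IB[OF unique]
    by (auto simp: n lower_def upper_def mode_def add_ac)
qed

end
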